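(* Let $\mathcal{C}_1=(C_1,E_1,\lambda_1)$ and $\mathcal{C}_2=(C_2,E_2,\lambda_2)$ be concept representation classes and let $(f,h)$ be a PC reduction from $\mathcal{C}_1$ to $\mathcal{C}_2$. If, for some concept $c\in C_1$ and some $n$, every set of labeled examples that uniquely characterizes $c$ in $\mathcal{C}_1$ has size at least $n$, then every set of labeled examples that uniquely characterizes $f(c)$ in $\mathcal{C}_2$ has size at least $n$.
   Context: A concept representation class is a triple $(C,E,\lambda)$ with $C$ a set of concepts, $E$ a set of examples, and $\lambda:C\to\mathcal{P}(E)$; concepts $c,c'$ are equivalent if $\lambda(c)=\lambda(c')$. A labeled example is a pair $(e,\mathrm{lab})$ with $e\in E$, $\mathrm{lab}\in\{0,1\}$; $c$ fits it if ($e\in\lambda(c)$ iff $\mathrm{lab}=1$). A set $S$ of labeled examples uniquely characterizes $c$ if $c$ fits all of $S$ and every concept fitting all of $S$ is equivalent to $c$. A PC reduction from $\mathcal{C}_1$ to $\mathcal{C}_2$ is a pair $(f,h)$ with $f:C_1\to C_2$ and $h:E_1\to E_2$ such that (i) for all $c\in C_1$, $e\in E_1$: $e\in\lambda_1(c)$ iff $h(e)\in\lambda_2(f(c))$; and (ii) for each $e\in E_2$, either $e\in\lambda_2(f(c))$ for all $c\in C_1$, or $e\in\lambda_2(f(c))$ for no $c\in C_1$, or there is $e'\in E_1$ with $\{c\in C_1\mid e\in\lambda_2(f(c))\}=\{c\in C_1\mid e'\in\lambda_1(c)\}$. *)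

theory Defs
  imports Main
begin

definition concept_class :: "'c set \<Rightarrow> 'e set \<Rightarrow> ('c \<Rightarrow> 'e set) \<Rightarrow> bool" where
  "concept_class C E lam \<longleftrightarrow> (\<forall>c\<in>C. lam c \<subseteq> E)"

text \<open>Labeled examples are pairs (e, lab) with lab a bit; True encodes label 1.\<close>
definition fits :: "('c \<Rightarrow> 'e set) \<Rightarrow> 'c \<Rightarrow> 'e \<times> bool \<Rightarrow> bool" where
  "fits lam c ex \<longleftrightarrow> (fst ex \<in> lam c \<longleftrightarrow> snd ex)"

definition uniquely_characterizes ::
  "'c set \<Rightarrow> 'e set \<Rightarrow> ('c \<Rightarrow> 'e set) \<Rightarrow> ('e \<times> bool) set \<Rightarrow> 'c \<Rightarrow> bool" where
  "uniquely_characterizes C E lam S c \<longleftrightarrow>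
     S \<subseteq> E \<times> UNIV \<and>
     (\<forall>ex\<in>S. fits lam c ex) \<and>
     (\<forall>c'\<in>C. (\<forall>ex\<in>S. fits lam c' ex) \<longrightarrow> lam c' = lam c)"

definition pc_reduction ::
  "'c1 set \<Rightarrow> 'e1 set \<Rightarrow> ('c1 \<Rightarrow> 'e1 set) \<Rightarrow>
   'c2 set \<Rightarrow> 'e2 set \<Rightarrow> ('c2 \<Rightarrow> 'e2 set) \<Rightarrow>
   ('c1 \<Rightarrow> 'c2) \<Rightarrow> ('e1 \<Rightarrow> 'e2) \<Rightarrow> bool" where
  "pc_reduction C1 E1 lam1 C2 E2 lam2 f h \<longleftrightarrow>
     f ` C1 \<subseteq> C2 \<and> h ` E1 \<subseteq> E2 \<and>
     (\<forall>c\<in>C1. \<forall>e\<in>E1. e \<in> lam1 c \<longleftrightarrow> h e \<in> lam2 (f c)) \<and>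
     (\<forall>e\<in>E2. (\<forall>c\<in>C1. e \<in> lam2 (f c)) \<or> (\<forall>c\<in>C1. e \<notin> lam2 (f c)) \<or>
        (\<exists>e'\<in>E1. {c\<in>C1. e \<in> lam2 (f c)} = {c\<in>C1. e' \<in> lam1 c}))"

definition size_at_least :: "'a set \<Rightarrow> nat \<Rightarrow> bool" where
  "size_at_least S n \<longleftrightarrow> infinite S \<or> n \<le> card S"

end

theory Submission
  imports Defs
begin

text \<open>Every example of \<open>C\<^sub>2\<close> that does not split the image \<open>f ` C\<^sub>1\<close> trivially splits it like
  some example of \<open>C\<^sub>1\<close>. Replacing each informative example of a characterizing set for \<open>f c\<close> by
  such a preimage and dropping the uninformative ones yields a characterizing set for \<open>c\<close> that is
  no larger, so lower bounds on characterizing sets transfer along the reduction.\<close>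

definition pullback_example ::
  "'c1 set \<Rightarrow> ('c1 \<Rightarrow> 'e1 set) \<Rightarrow> ('c2 \<Rightarrow> 'e2 set) \<Rightarrow> ('c1 \<Rightarrow> 'c2) \<Rightarrow> 'e2 \<Rightarrow> 'e1 \<Rightarrow> bool" where
  "pullback_example C1 lam1 lam2 f e2 e1 \<longleftrightarrow> {c\<in>C1. e2 \<in> lam2 (f c)} = {c\<in>C1. e1 \<in> lam1 c}"

lemma fits_pullback_example:
  assumes "pullback_example C1 lam1 lam2 f e2 e1" and "c \<in> C1"
  shows "fits lam1 c (e1, b) \<longleftrightarrow> fits lam2 (f c) (e2, b)"
  using assms by (auto simp: pullback_example_def fits_def)

lemma pc_reduction_fits_example_without_pullback:
  assumes "pc_reduction C1 E1 lam1 C2 E2 lam2 f h" and "e \<in> E2"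
    and "\<nexists>e1. e1 \<in> E1 \<and> pullback_example C1 lam1 lam2 f e e1"
    and "c \<in> C1" and "c' \<in> C1"
  shows "fits lam2 (f c) (e, b) \<longleftrightarrow> fits lam2 (f c') (e, b)"
proof -
  have "(\<forall>c\<in>C1. e \<in> lam2 (f c)) \<or> (\<forall>c\<in>C1. e \<notin> lam2 (f c))"
    using assms(1-3) by (auto simp: pc_reduction_def pullback_example_def)
  with assms(4,5) show ?thesis by (auto simp: fits_def)
qed

lemma pc_reduction_reflects_equivalence:
  assumes "pc_reduction C1 E1 lam1 C2 E2 lam2 f h" and "concept_class C1 E1 lam1"
    and "c \<in> C1" and "c' \<in> C1" and "lam2 (f c) = lam2 (f c')"
  shows "lam1 c = lam1 c'"
proof -
  have "e \<in> lam1 c \<longleftrightarrow> e \<in> lam1 c'" if "e \<in> E1" for e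
    using assms that by (simp add: pc_reduction_def)
  moreover have "lam1 c \<subseteq> E1" and "lam1 c' \<subseteq> E1"
    using assms(2-4) by (auto simp: concept_class_def)
  ultimately show ?thesis by blast
qed

definition pullback_examples ::
  "'c1 set \<Rightarrow> 'e1 set \<Rightarrow> ('c1 \<Rightarrow> 'e1 set) \<Rightarrow> ('c2 \<Rightarrow> 'e2 set) \<Rightarrow> ('c1 \<Rightarrow> 'c2) \<Rightarrow>
   ('e2 \<times> bool) set \<Rightarrow> ('e1 \<times> bool) set" where
  "pullback_examples C1 E1 lam1 lam2 f S =
     (\<lambda>(e2, b). (SOME e1. e1 \<in> E1 \<and> pullback_example C1 lam1 lam2 f e2 e1, b)) `
       {(e2, b) \<in> S. \<exists>e1. e1 \<in> E1 \<and> pullback_example C1 lam1 lam2 f e2 e1}"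

lemma pullback_examplesE:
  assumes "(e1, b) \<in> pullback_examples C1 E1 lam1 lam2 f S"
  obtains e2 where "(e2, b) \<in> S" and "e1 \<in> E1" and "pullback_example C1 lam1 lam2 f e2 e1"
proof -
  let ?P = "\<lambda>e2 e1. e1 \<in> E1 \<and> pullback_example C1 lam1 lam2 f e2 e1"
  from assms obtain e2 where "(e2, b) \<in> S" and "\<exists>e1. ?P e2 e1" and "e1 = (SOME e1. ?P e2 e1)"
    unfolding pullback_examples_def by auto
  with someI_ex[of "?P e2"] that show thesis by blast
qed

lemma pullback_examplesI:
  assumes "(e2, b) \<in> S" and "e1 \<in> E1" and "pullback_example C1 lam1 lam2 f e2 e1"
  obtains e1' where "(e1', b) \<in> pullback_examples C1 E1 lam1 lam2 f S"
    and "pullback_example C1 lam1 lam2 f e2 e1'"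
proof
  let ?e1' = "SOME e1. e1 \<in> E1 \<and> pullback_example C1 lam1 lam2 f e2 e1"
  show "(?e1', b) \<in> pullback_examples C1 E1 lam1 lam2 f S"
    using assms unfolding pullback_examples_def by (auto intro!: image_eqI[where x = "(e2, b)"])
  show "pullback_example C1 lam1 lam2 f e2 ?e1'"
    using assms by (metis (mono_tags, lifting) someI_ex)
qed

lemma pullback_examples_subset: "pullback_examples C1 E1 lam1 lam2 f S \<subseteq> E1 \<times> UNIV"
  by (auto elim: pullback_examplesE)

lemma fits_pullback_examples:
  assumes "c \<in> C1" and "\<forall>x\<in>S. fits lam2 (f c) x"
  shows "\<forall>x\<in>pullback_examples C1 E1 lam1 lam2 f S. fits lam1 c x"
  using assms by (auto elim!: pullback_examplesE simp: fits_pullback_example)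

lemma fits_of_fits_pullback_examples:
  assumes red: "pc_reduction C1 E1 lam1 C2 E2 lam2 f h" and S: "S \<subseteq> E2 \<times> UNIV"
    and c: "c \<in> C1" and fits_c: "\<forall>x\<in>S. fits lam2 (f c) x" and c': "c' \<in> C1"
    and fits_c': "\<forall>x\<in>pullback_examples C1 E1 lam1 lam2 f S. fits lam1 c' x"
  shows "\<forall>x\<in>S. fits lam2 (f c') x"
proof (intro ballI, clarify)
  fix e2 b assume x: "(e2, b) \<in> S"
  show "fits lam2 (f c') (e2, b)"
  proof (cases "\<exists>e1. e1 \<in> E1 \<and> pullback_example C1 lam1 lam2 f e2 e1")
    case True
    with x obtain e1 where "(e1, b) \<in> pullback_examples C1 E1 lam1 lam2 f S"
      and "pullback_example C1 lam1 lam2 f e2 e1"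
      by (blast elim: pullback_examplesI)
    with fits_c' c' show ?thesis using fits_pullback_example[of C1 lam1 lam2 f e2 e1 c' b] by blast
  next
    case False
    moreover have "e2 \<in> E2" using x S by auto
    ultimately show ?thesis
      using pc_reduction_fits_example_without_pullback[OF red _ _ c c'] fits_c x by blast
  qed
qed

lemma pc_reduction_pullback_characterization:
  assumes red: "pc_reduction C1 E1 lam1 C2 E2 lam2 f h" and cls: "concept_class C1 E1 lam1"
    and c: "c \<in> C1" and uc: "uniquely_characterizes C2 E2 lam2 S (f c)"
  shows "uniquely_characterizes C1 E1 lam1 (pullback_examples C1 E1 lam1 lam2 f S) c"
  unfolding uniquely_characterizes_def
proof (intro conjI ballI impI)
  have S: "S \<subseteq> E2 \<times> UNIV" and fits_S: "\<forall>x\<in>S. fits lam2 (f c) x"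
    and unique: "\<And>c'. c' \<in> C2 \<Longrightarrow> \<forall>x\<in>S. fits lam2 c' x \<Longrightarrow> lam2 c' = lam2 (f c)"
    using uc by (auto simp: uniquely_characterizes_def)
  show "pullback_examples C1 E1 lam1 lam2 f S \<subseteq> E1 \<times> UNIV"
    by (rule pullback_examples_subset)
  show "fits lam1 c x" if "x \<in> pullback_examples C1 E1 lam1 lam2 f S" for x
    using fits_pullback_examples[of c C1 S lam2 f, OF c fits_S] that by blast
  fix c' assume c': "c' \<in> C1"
    and "\<forall>x\<in>pullback_examples C1 E1 lam1 lam2 f S. fits lam1 c' x"
  with red S c fits_S have "\<forall>x\<in>S. fits lam2 (f c') x"
    by (rule fits_of_fits_pullback_examples)
  moreover have "f c' \<in> C2" using red c' by (auto simp: pc_reduction_def)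
  ultimately have "lam2 (f c') = lam2 (f c)" using unique by blast
  then show "lam1 c' = lam1 c"
    using pc_reduction_reflects_equivalence[OF red cls c' c] by blast
qed

lemma size_at_least_pullback_examples:
  assumes "size_at_least (pullback_examples C1 E1 lam1 lam2 f S) n"
  shows "size_at_least S n"
proof (cases "finite S")
  case True
  let ?T = "{(e2, b) \<in> S. \<exists>e1. e1 \<in> E1 \<and> pullback_example C1 lam1 lam2 f e2 e1}"
  have "?T \<subseteq> S" by auto
  with True have "finite ?T" and "card ?T \<le> card S"
    by (auto intro: finite_subset card_mono)
  then have "finite (pullback_examples C1 E1 lam1 lam2 f S)"
    and "card (pullback_examples C1 E1 lam1 lam2 f S) \<le> card S"
    unfolding pullback_examples_def using card_image_le le_trans by blast+
  with assms show ?thesis by (auto simp: size_at_least_def)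
qed (simp add: size_at_least_def)

theorem propositionA5:
  fixes C1 :: "'c1 set" and E1 :: "'e1 set" and lam1 :: "'c1 \<Rightarrow> 'e1 set"
    and C2 :: "'c2 set" and E2 :: "'e2 set" and lam2 :: "'c2 \<Rightarrow> 'e2 set"
    and f :: "'c1 \<Rightarrow> 'c2" and h :: "'e1 \<Rightarrow> 'e2" and c :: 'c1 and n :: nat
  assumes "concept_class C1 E1 lam1"
    and "concept_class C2 E2 lam2"
    and "pc_reduction C1 E1 lam1 C2 E2 lam2 f h"
    and "c \<in> C1"
    and "\<forall>S. uniquely_characterizes C1 E1 lam1 S c \<longrightarrow> size_at_least S n"
  shows "\<forall>S. uniquely_characterizes C2 E2 lam2 S (f c) \<longrightarrow> size_at_least S n"
proof (intro allI impI)
  fix S assume "uniquely_characterizes C2 E2 lam2 S (f c)"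
  with assms(3,1,4)
  have "uniquely_characterizes C1 E1 lam1 (pullback_examples C1 E1 lam1 lam2 f S) c"
    by (rule pc_reduction_pullback_characterization)
  with assms(5) show "size_at_least S n"
    by (blast intro: size_at_least_pullback_examples)
qed

end
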